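(* Let $a,b,\alpha,\beta$ be variables and let $n\ge 1$ be a natural number. There exist polynomials in $a,b,\alpha,\beta$ with integer coefficients, denoted $\Psi\left(\begin{array}{cc|c} a & b & n \\ \alpha & \beta & r \end{array}\right)$ for $0\le r\le \lfloor n/2\rfloor$ and $\Phi\left(\begin{array}{cc|c} a & b & n \\ \alpha & \beta & r \end{array}\right)$ for $0\le r\le \lfloor (n-1)/2\rfloor$, depending only on $a,b,\alpha,\beta,n,r$, such that the following polynomial identities in $x,y$ hold: \[ (\beta a-\alpha b)^{\lfloor n/2\rfloor}\frac{x^n+y^n}{(x+y)^{\delta(n)}}=\sum_{r=0}^{\lfloor n/2\rfloor}\Psi\left(\begin{array}{cc|c} a & b & n \\ \alpha & \beta & r \end{array}\right)(\alpha x^2+\beta xy+\alpha y^2)^{\lfloor n/2\rfloor-r}(ax^2+bxy+ay^2)^r, \] \[ (\beta a-\alpha b)^{\lfloor (n-1)/2\rfloor}\frac{x^n-y^n}{(x-y)(x+y)^{\delta(n-1)}}=\sum_{r=0}^{\lfloor (n-1)/2\rfloor}\Phi\left(\begin{array}{cc|c} a & b & n \\ \alpha & \beta & r \end{array}\right)(\alpha x^2+\beta xy+\alpha y^2)^{\lfloor (n-1)/2\rfloor-r}(ax^2+bxy+ay^2)^r. \]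
   Context: $\delta(m)=1$ if $m$ is odd and $\delta(m)=0$ if $m$ is even; $\lfloor m/2\rfloor$ is the largest integer $\le m/2$. Note $\frac{x^n+y^n}{(x+y)^{\delta(n)}}$ and $\frac{x^n-y^n}{(x-y)(x+y)^{\delta(n-1)}}$ are polynomials in $x,y$. *)

theory Defs
  imports "HOL-Computational_Algebra.Polynomial"
begin

text \<open>Polynomials in a, b, alpha, beta with integer coefficients are represented as
  nested univariate polynomials Z[beta][alpha][b][a]; eval4 evaluates such a polynomial.\<close>
definition eval4 :: "int poly poly poly poly \<Rightarrow> int \<Rightarrow> int \<Rightarrow> int \<Rightarrow> int \<Rightarrow> int" where
  "eval4 P a b \<alpha> \<beta> =
     poly (map_poly (\<lambda>q. poly (map_poly (\<lambda>r. poly (map_poly (\<lambda>s. poly s \<beta>) r) \<alpha>) q) b) P) a"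

definition delta :: "nat \<Rightarrow> nat" where
  "delta m = (if odd m then 1 else 0)"

text \<open>The polynomial (x^n + y^n) / (x+y)^delta(n), written out explicitly.\<close>
definition plus_quot :: "nat \<Rightarrow> int \<Rightarrow> int \<Rightarrow> int" where
  "plus_quot n x y =
     (if odd n then (\<Sum>k<n. (-1)^k * x^(n-1-k) * y^k) else x^n + y^n)"

text \<open>The polynomial (x^n - y^n) / ((x-y)(x+y)^delta(n-1)), written out explicitly (n \<ge> 1).\<close>
definition minus_quot :: "nat \<Rightarrow> int \<Rightarrow> int \<Rightarrow> int" where
  "minus_quot n x y =
     (if even n then (\<Sum>k<n div 2. x^(n-2-2*k) * y^(2*k)) else (\<Sum>k<n. x^(n-1-k) * y^k))"


end

theory Submission
  imports Defs
begin

text \<open>Put \<open>s = x\<^sup>2 + y\<^sup>2\<close>, \<open>p = x y\<close>, \<open>U = \<alpha> s + \<beta> p\<close>, \<open>V = a s + b p\<close> and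
  \<open>D = \<beta> a - \<alpha> b\<close>; then \<open>D s = \<beta> V - b U\<close> and \<open>D p = a U - \<alpha> V\<close>. Each of the two
  quotients is the \<open>m\<close>-th term of a sequence \<open>f\<close> with \<open>f (k + 2) = s f (k + 1) - p\<^sup>2 f k\<close>,
  constant \<open>f 0\<close> and \<open>f 1\<close> an integer combination of \<open>s\<close> and \<open>p\<close>, where \<open>m\<close> is the exponent of
  \<open>D\<close> in the identity. Multiplying the recurrence by \<open>D\<^sup>k\<^sup>+\<^sup>2\<close> shows inductively that
  \<open>D\<^sup>k f k\<close> is a form of degree \<open>k\<close> in \<open>U\<close> and \<open>V\<close> with coefficients in \<open>\<int>[a, b, \<alpha>, \<beta>]\<close>.\<close>

definition ring_hom :: "('a::comm_ring_1 \<Rightarrow> 'b::comm_ring_1) \<Rightarrow> bool" where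
  "ring_hom h \<longleftrightarrow> h 1 = 1 \<and> (\<forall>u v. h (u + v) = h u + h v) \<and> (\<forall>u v. h (u * v) = h u * h v)"

lemma ring_hom_add: "ring_hom h \<Longrightarrow> h (u + v) = h u + h v"
  and ring_hom_mult: "ring_hom h \<Longrightarrow> h (u * v) = h u * h v"
  unfolding ring_hom_def by auto

lemma ring_hom_0: "ring_hom h \<Longrightarrow> h 0 = 0"
  using ring_hom_add[of h 0 0] by simp

lemma ring_hom_diff: "ring_hom h \<Longrightarrow> h (u - v) = h u - h v"
  using ring_hom_add[of h "u - v" v] by (simp add: eq_diff_eq)

lemma ring_hom_uminus: "ring_hom h \<Longrightarrow> h (- u) = - h u"
  using ring_hom_diff[of h 0 u] ring_hom_0[of h] by simp

lemma ring_hom_poly_map_poly: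
  assumes h: "ring_hom h"
  shows "ring_hom (\<lambda>p. poly (map_poly h p) x)"
proof -
  have h0: "h 0 = 0" using h by (rule ring_hom_0)
  have add: "poly (map_poly h (p + q)) x = poly (map_poly h p) x + poly (map_poly h q) x" for p q
  proof -
    have "map_poly h (p + q) = map_poly h p + map_poly h q"
      by (intro poly_eqI) (simp add: coeff_map_poly h0 ring_hom_add[OF h])
    then show ?thesis by simp
  qed
  have mult: "poly (map_poly h (p * q)) x = poly (map_poly h p) x * poly (map_poly h q) x" for p q
  proof (induction p rule: pCons_induct)
    case 0
    then show ?case by simp
  next
    case (pCons c p)
    have "poly (map_poly h (pCons c p * q)) x = poly (map_poly h (smult c q + pCons 0 (p * q))) x"
      by simp
    also have "\<dots> = h c * poly (map_poly h q) x + x * poly (map_poly h (p * q)) x"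
      by (simp add: add map_poly_smult map_poly_pCons h0 ring_hom_mult[OF h])
    also have "\<dots> = poly (map_poly h (pCons c p)) x * poly (map_poly h q) x"
      using pCons.IH by (simp add: map_poly_pCons h0 algebra_simps)
    finally show ?case .
  qed
  have "h 1 = 1" using h unfolding ring_hom_def by blast
  then show ?thesis unfolding ring_hom_def using add mult by simp
qed

lemma ring_hom_eval4: "ring_hom (\<lambda>P. eval4 P a b \<alpha> \<beta>)"
proof -
  have "ring_hom (\<lambda>s::int poly. poly s \<beta>)"
    unfolding ring_hom_def by simp
  then have "ring_hom (\<lambda>q. poly (map_poly (\<lambda>r. poly (map_poly (\<lambda>s. poly s \<beta>) r) \<alpha>) q) b)"
    by (intro ring_hom_poly_map_poly)
  then show ?thesis
    unfolding eval4_def by (rule ring_hom_poly_map_poly)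
qed

lemma eval4_add: "eval4 (P + Q) a b \<alpha> \<beta> = eval4 P a b \<alpha> \<beta> + eval4 Q a b \<alpha> \<beta>"
  and eval4_diff: "eval4 (P - Q) a b \<alpha> \<beta> = eval4 P a b \<alpha> \<beta> - eval4 Q a b \<alpha> \<beta>"
  and eval4_uminus: "eval4 (- P) a b \<alpha> \<beta> = - eval4 P a b \<alpha> \<beta>"
  and eval4_mult: "eval4 (P * Q) a b \<alpha> \<beta> = eval4 P a b \<alpha> \<beta> * eval4 Q a b \<alpha> \<beta>"
  and eval4_0: "eval4 0 a b \<alpha> \<beta> = 0"
  by (rule ring_hom_add ring_hom_diff ring_hom_uminus ring_hom_mult ring_hom_0, rule ring_hom_eval4)+

lemma eval4_const: "eval4 [:[:[:[:c:]:]:]:] a b \<alpha> \<beta> = c"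
  and eval4_var_a: "eval4 [:0, 1:] a b \<alpha> \<beta> = a"
  and eval4_var_b: "eval4 [:[:0, 1:]:] a b \<alpha> \<beta> = b"
  and eval4_var_alpha: "eval4 [:[:[:0, 1:]:]:] a b \<alpha> \<beta> = \<alpha>"
  and eval4_var_beta: "eval4 [:[:[:[:0, 1:]:]:]:] a b \<alpha> \<beta> = \<beta>"
  by (simp_all add: eval4_def map_poly_pCons)

definition quad_form :: "int \<Rightarrow> int \<Rightarrow> int \<Rightarrow> int \<Rightarrow> int" where
  "quad_form c d x y = c*x^2 + d*x*y + c*y^2"

definition uv_comb ::
    "nat \<Rightarrow> (nat \<Rightarrow> int poly poly poly poly) \<Rightarrow> int \<Rightarrow> int \<Rightarrow> int \<Rightarrow> int \<Rightarrow> int \<Rightarrow> int \<Rightarrow> int" where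
  "uv_comb m \<Psi> a b \<alpha> \<beta> x y =
     (\<Sum>r\<le>m. eval4 (\<Psi> r) a b \<alpha> \<beta> * quad_form \<alpha> \<beta> x y ^ (m - r) * quad_form a b x y ^ r)"

definition uv_form :: "nat \<Rightarrow> (int \<Rightarrow> int \<Rightarrow> int \<Rightarrow> int \<Rightarrow> int \<Rightarrow> int \<Rightarrow> int) \<Rightarrow> bool" where
  "uv_form m F \<longleftrightarrow> (\<exists>\<Psi>. F = uv_comb m \<Psi>)"

lemma uv_comb_const: "uv_comb 0 (\<lambda>r. [:[:[:[:c:]:]:]:]) a b \<alpha> \<beta> x y = c"
  by (simp add: uv_comb_def eval4_const)

lemma uv_comb_add:
  "uv_comb m \<Psi> a b \<alpha> \<beta> x y + uv_comb m \<Phi> a b \<alpha> \<beta> x y = uv_comb m (\<lambda>r. \<Psi> r + \<Phi> r) a b \<alpha> \<beta> x y"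
  by (simp add: uv_comb_def eval4_add distrib_right sum.distrib)

lemma uv_comb_diff:
  "uv_comb m \<Psi> a b \<alpha> \<beta> x y - uv_comb m \<Phi> a b \<alpha> \<beta> x y = uv_comb m (\<lambda>r. \<Psi> r - \<Phi> r) a b \<alpha> \<beta> x y"
  by (simp add: uv_comb_def eval4_diff left_diff_distrib sum_subtractf)

lemma uv_comb_mult_U:
  "eval4 P a b \<alpha> \<beta> * quad_form \<alpha> \<beta> x y * uv_comb m \<Psi> a b \<alpha> \<beta> x y =
     uv_comb (Suc m) (\<lambda>r. if r \<le> m then P * \<Psi> r else 0) a b \<alpha> \<beta> x y"
proof -
  have "eval4 P a b \<alpha> \<beta> * quad_form \<alpha> \<beta> x y * uv_comb m \<Psi> a b \<alpha> \<beta> x y =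
      (\<Sum>r\<le>m. eval4 (P * \<Psi> r) a b \<alpha> \<beta> * quad_form \<alpha> \<beta> x y ^ (Suc m - r) * quad_form a b x y ^ r)"
    unfolding uv_comb_def sum_distrib_left
    by (intro sum.cong refl) (simp add: eval4_mult Suc_diff_le)
  then show ?thesis
    by (simp add: uv_comb_def eval4_0)
qed

lemma uv_comb_mult_V:
  "eval4 Q a b \<alpha> \<beta> * quad_form a b x y * uv_comb m \<Psi> a b \<alpha> \<beta> x y =
     uv_comb (Suc m) (\<lambda>r. if r = 0 then 0 else Q * \<Psi> (r - 1)) a b \<alpha> \<beta> x y"
proof -
  have "eval4 Q a b \<alpha> \<beta> * quad_form a b x y * uv_comb m \<Psi> a b \<alpha> \<beta> x y =
      (\<Sum>r\<le>m. eval4 (Q * \<Psi> r) a b \<alpha> \<beta> * quad_form \<alpha> \<beta> x y ^ (Suc m - Suc r) * quad_form a b x y ^ Suc r)"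
    unfolding uv_comb_def sum_distrib_left
    by (intro sum.cong refl) (simp add: eval4_mult)
  then show ?thesis
    unfolding uv_comb_def by (subst sum.atMost_Suc_shift) (simp add: eval4_0)
qed

lemma uv_form_const: "uv_form 0 (\<lambda>a b \<alpha> \<beta> x y. c)"
  unfolding uv_form_def by (rule exI[of _ "\<lambda>r. [:[:[:[:c:]:]:]:]"]) (simp add: fun_eq_iff uv_comb_const)

lemma uv_form_add:
  assumes "uv_form m F" "uv_form m G"
  shows "uv_form m (\<lambda>a b \<alpha> \<beta> x y. F a b \<alpha> \<beta> x y + G a b \<alpha> \<beta> x y)"
proof -
  obtain \<Psi> \<Phi> where F: "F = uv_comb m \<Psi>" and G: "G = uv_comb m \<Phi>"
    using assms unfolding uv_form_def by blast
  show ?thesis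
    unfolding uv_form_def F G uv_comb_add by blast
qed

lemma uv_form_diff:
  assumes "uv_form m F" "uv_form m G"
  shows "uv_form m (\<lambda>a b \<alpha> \<beta> x y. F a b \<alpha> \<beta> x y - G a b \<alpha> \<beta> x y)"
proof -
  obtain \<Psi> \<Phi> where F: "F = uv_comb m \<Psi>" and G: "G = uv_comb m \<Phi>"
    using assms unfolding uv_form_def by blast
  show ?thesis
    unfolding uv_form_def F G uv_comb_diff by blast
qed

lemma uv_form_mult_linear:
  assumes "uv_form m F"
  shows "uv_form (Suc m) (\<lambda>a b \<alpha> \<beta> x y.
    (eval4 P a b \<alpha> \<beta> * quad_form \<alpha> \<beta> x y + eval4 Q a b \<alpha> \<beta> * quad_form a b x y) * F a b \<alpha> \<beta> x y)"
proof -
  obtain \<Psi> where F: "F = uv_comb m \<Psi>"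
    using assms unfolding uv_form_def by blast
  show ?thesis
    unfolding uv_form_def F distrib_right uv_comb_mult_U uv_comb_mult_V uv_comb_add by blast
qed

lemma uv_form_mult_D_sum_sq:
  assumes "uv_form m F"
  shows "uv_form (Suc m) (\<lambda>a b \<alpha> \<beta> x y. (\<beta>*a - \<alpha>*b) * (x^2 + y^2) * F a b \<alpha> \<beta> x y)"
proof -
  have D_sum_sq: "(\<beta>*a - \<alpha>*b) * (x^2 + y^2) =
      eval4 (- [:[:0, 1:]:]) a b \<alpha> \<beta> * quad_form \<alpha> \<beta> x y
      + eval4 [:[:[:[:0, 1:]:]:]:] a b \<alpha> \<beta> * quad_form a b x y" for a b \<alpha> \<beta> x y
    unfolding eval4_uminus eval4_var_b eval4_var_beta quad_form_def by (simp add: algebra_simps)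
  show ?thesis
    unfolding D_sum_sq by (rule uv_form_mult_linear[OF assms])
qed

lemma uv_form_mult_D_prod:
  assumes "uv_form m F"
  shows "uv_form (Suc m) (\<lambda>a b \<alpha> \<beta> x y. (\<beta>*a - \<alpha>*b) * (x*y) * F a b \<alpha> \<beta> x y)"
proof -
  have D_prod: "(\<beta>*a - \<alpha>*b) * (x*y) =
      eval4 [:0, 1:] a b \<alpha> \<beta> * quad_form \<alpha> \<beta> x y
      + eval4 (- [:[:[:0, 1:]:]:]) a b \<alpha> \<beta> * quad_form a b x y" for a b \<alpha> \<beta> x y
    unfolding eval4_uminus eval4_var_a eval4_var_alpha quad_form_def
    by (simp add: algebra_simps power2_eq_square)
  show ?thesis
    unfolding D_prod by (rule uv_form_mult_linear[OF assms])
qed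

lemma uv_form_recurrence:
  fixes f :: "nat \<Rightarrow> int \<Rightarrow> int \<Rightarrow> int"
  assumes rec: "\<And>k x y. f (Suc (Suc k)) x y = (x^2 + y^2) * f (Suc k) x y - (x*y)^2 * f k x y"
    and f0: "\<And>x y. f 0 x y = c\<^sub>0"
    and f1: "\<And>x y. f 1 x y = c\<^sub>1 * (x^2 + y^2) + c\<^sub>2 * (x*y)"
  shows "uv_form k (\<lambda>a b \<alpha> \<beta> x y. (\<beta>*a - \<alpha>*b)^k * f k x y)"
proof (induction k rule: induct_nat_012)
  case 0
  show ?case by (simp add: f0 uv_form_const)
next
  case 1
  have "(\<lambda>a b \<alpha> \<beta> x y. (\<beta>*a - \<alpha>*b)^Suc 0 * f (Suc 0) x y) =
      (\<lambda>a b \<alpha> \<beta> x y. (\<beta>*a - \<alpha>*b) * (x^2 + y^2) * c\<^sub>1 + (\<beta>*a - \<alpha>*b) * (x*y) * c\<^sub>2)"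
    by (simp add: fun_eq_iff f1[unfolded One_nat_def] algebra_simps)
  then show ?case
    by (simp only:) (intro uv_form_add uv_form_mult_D_sum_sq uv_form_mult_D_prod uv_form_const)
next
  case (ge2 k)
  have "(\<lambda>a b \<alpha> \<beta> x y. (\<beta>*a - \<alpha>*b)^Suc (Suc k) * f (Suc (Suc k)) x y) =
      (\<lambda>a b \<alpha> \<beta> x y. (\<beta>*a - \<alpha>*b) * (x^2 + y^2) * ((\<beta>*a - \<alpha>*b)^Suc k * f (Suc k) x y)
        - (\<beta>*a - \<alpha>*b) * (x*y) * ((\<beta>*a - \<alpha>*b) * (x*y) * ((\<beta>*a - \<alpha>*b)^k * f k x y)))"
    by (simp add: fun_eq_iff rec power2_eq_square algebra_simps)
  then show ?case
    by (simp only:) (intro uv_form_diff uv_form_mult_D_sum_sq uv_form_mult_D_prod ge2.IH)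
qed

definition power_diff_quot :: "nat \<Rightarrow> 'a::comm_ring_1 \<Rightarrow> 'a \<Rightarrow> 'a" where
  "power_diff_quot m x y = (\<Sum>j<m. x^(m-1-j) * y^j)"

lemma power_diff_quot_Suc: "power_diff_quot (Suc m) x y = x * power_diff_quot m x y + y^m"
proof -
  have "(\<Sum>j<m. x^(m-j) * y^j) = x * power_diff_quot m x y"
    unfolding power_diff_quot_def sum_distrib_left
    by (intro sum.cong refl) (simp add: Suc_diff_Suc mult.assoc[symmetric] flip: power_Suc)
  then show ?thesis
    unfolding power_diff_quot_def by simp
qed

lemma power_diff_quot_rec:
  "power_diff_quot (Suc (Suc m)) x y = (x + y) * power_diff_quot (Suc m) x y - x*y * power_diff_quot m x y"
  using power_diff_quot_Suc[of "Suc m" x y] power_diff_quot_Suc[of m x y] by (simp add: algebra_simps)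

lemma two_step_recurrence:
  fixes u :: "nat \<Rightarrow> 'a::comm_ring_1"
  assumes rec: "\<And>m. u (Suc (Suc m)) = t * u (Suc m) - q * u m"
  shows "u (m + 4) = (t^2 - 2*q) * u (m + 2) - q^2 * u m"
proof -
  have u4: "u (m + 4) = t * u (m + 3) - q * u (m + 2)"
    and u3: "u (m + 3) = t * u (m + 2) - q * u (m + 1)"
    and u2: "u (m + 2) = t * u (m + 1) - q * u m"
    using rec[of "m + 2"] rec[of "m + 1"] rec[of m] by (simp_all add: eval_nat_numeral)
  have tu1: "t * u (m + 1) = u (m + 2) + q * u m"
    unfolding u2 by simp
  have "u (m + 4) = t^2 * u (m + 2) - q * (t * u (m + 1)) - q * u (m + 2)"
    unfolding u4 u3 by (simp add: algebra_simps power2_eq_square)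
  also have "\<dots> = (t^2 - 2*q) * u (m + 2) - q^2 * u m"
    unfolding tu1 by (simp add: algebra_simps power2_eq_square)
  finally show ?thesis .
qed

lemma power_diff_quot_odd_rec:
  "power_diff_quot (2 * Suc (Suc k) + 1) x y =
     (x^2 + y^2) * power_diff_quot (2 * Suc k + 1) x y - (x*y)^2 * power_diff_quot (2*k + 1) x y"
proof -
  have "power_diff_quot (2*k + 1 + 4) x y =
      ((x + y)^2 - 2*(x*y)) * power_diff_quot (2*k + 1 + 2) x y - (x*y)^2 * power_diff_quot (2*k + 1) x y"
    by (rule two_step_recurrence) (rule power_diff_quot_rec)
  moreover have "(x + y)^2 - 2*(x*y) = x^2 + y^2"
    by (simp add: power2_eq_square algebra_simps)
  moreover have "2*k + 1 + 4 = 2 * Suc (Suc k) + 1" "2*k + 1 + 2 = 2 * Suc k + 1"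
    by simp_all
  ultimately show ?thesis
    by (simp only:)
qed

lemma uv_form_plus_quot:
  "uv_form (n div 2) (\<lambda>a b \<alpha> \<beta> x y. (\<beta>*a - \<alpha>*b)^(n div 2) * plus_quot n x y)"
proof (cases "even n")
  case True
  then obtain k where n: "n = 2*k" ..
  have "uv_form k (\<lambda>a b \<alpha> \<beta> x y. (\<beta>*a - \<alpha>*b)^k * (x^(2*k) + y^(2*k)))"
    by (rule uv_form_recurrence[where f = "\<lambda>k x y. x^(2*k) + y^(2*k)" and c\<^sub>0 = 2 and c\<^sub>1 = 1 and c\<^sub>2 = 0])
      (simp_all add: algebra_simps power_add power_mult_distrib power2_eq_square)
  then show ?thesis
    by (simp add: n plus_quot_def)
next
  case False
  then obtain k where n: "n = 2*k + 1" ..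
  have "uv_form k (\<lambda>a b \<alpha> \<beta> x y. (\<beta>*a - \<alpha>*b)^k * power_diff_quot (2*k + 1) x (-y))"
  proof (rule uv_form_recurrence[where f = "\<lambda>k x y. power_diff_quot (2*k + 1) x (-y)"
        and c\<^sub>0 = 1 and c\<^sub>1 = 1 and c\<^sub>2 = "-1"])
    show "power_diff_quot (2 * Suc (Suc k) + 1) x (-y) =
        (x^2 + y^2) * power_diff_quot (2 * Suc k + 1) x (-y) - (x*y)^2 * power_diff_quot (2*k + 1) x (-y)"
      for k and x y :: int
      using power_diff_quot_odd_rec[of k x "-y"] by simp
  qed (simp_all add: power_diff_quot_def eval_nat_numeral power2_eq_square)
  moreover have "plus_quot n x y = power_diff_quot n x (-y)" for x y :: int
    using False by (simp add: plus_quot_def power_diff_quot_def power_minus[of y] mult.assoc mult.left_commute)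
  ultimately show ?thesis
    by (simp add: n)
qed

lemma uv_form_minus_quot:
  assumes "n \<ge> 1"
  shows "uv_form ((n - 1) div 2) (\<lambda>a b \<alpha> \<beta> x y. (\<beta>*a - \<alpha>*b)^((n - 1) div 2) * minus_quot n x y)"
proof (cases "even n")
  case True
  then obtain m where "n = 2*m" ..
  with assms obtain k where n: "n = 2 * Suc k"
    by (cases m) auto
  have "uv_form k (\<lambda>a b \<alpha> \<beta> x y. (\<beta>*a - \<alpha>*b)^k * power_diff_quot (Suc k) (x^2) (y^2))"
    by (rule uv_form_recurrence[where f = "\<lambda>k x y. power_diff_quot (Suc k) (x^2) (y^2)"
          and c\<^sub>0 = 1 and c\<^sub>1 = 1 and c\<^sub>2 = 0],
        unfold power_mult_distrib, rule power_diff_quot_rec)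
      (simp_all add: power_diff_quot_def numeral_2_eq_2)
  moreover have "minus_quot n x y = power_diff_quot (Suc k) (x^2) (y^2)" for x y :: int
  proof -
    have "x^(n - 2 - 2*j) * y^(2*j) = (x^2)^(Suc k - 1 - j) * (y^2)^j" for j
    proof -
      have "n - 2 - 2*j = 2 * (Suc k - 1 - j)"
        using n by simp
      then show ?thesis
        by (simp only: power_mult)
    qed
    then show ?thesis
      using True n by (simp add: minus_quot_def power_diff_quot_def)
  qed
  ultimately show ?thesis
    by (simp add: n)
next
  case False
  then obtain k where n: "n = 2*k + 1" ..
  have "uv_form k (\<lambda>a b \<alpha> \<beta> x y. (\<beta>*a - \<alpha>*b)^k * power_diff_quot (2*k + 1) x y)"
    by (rule uv_form_recurrence[where f = "\<lambda>k x y. power_diff_quot (2*k + 1) x y"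
          and c\<^sub>0 = 1 and c\<^sub>1 = 1 and c\<^sub>2 = 1], rule power_diff_quot_odd_rec)
      (simp_all add: power_diff_quot_def eval_nat_numeral power2_eq_square)
  then show ?thesis
    by (simp add: n minus_quot_def power_diff_quot_def)
qed

theorem theorem3p1:
  fixes n :: nat
  assumes "n \<ge> 1"
  shows "\<exists>\<Psi> \<Phi> :: nat \<Rightarrow> int poly poly poly poly.
    \<forall>a b \<alpha> \<beta> x y :: int.
      (\<beta>*a - \<alpha>*b)^(n div 2) * plus_quot n x y =
        (\<Sum>r\<le>n div 2. eval4 (\<Psi> r) a b \<alpha> \<beta>
            * (\<alpha>*x^2 + \<beta>*x*y + \<alpha>*y^2)^(n div 2 - r) * (a*x^2 + b*x*y + a*y^2)^r)
    \<and> (\<beta>*a - \<alpha>*b)^((n-1) div 2) * minus_quot n x y =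
        (\<Sum>r\<le>(n-1) div 2. eval4 (\<Phi> r) a b \<alpha> \<beta>
            * (\<alpha>*x^2 + \<beta>*x*y + \<alpha>*y^2)^((n-1) div 2 - r) * (a*x^2 + b*x*y + a*y^2)^r)"
proof -
  obtain \<Psi> where \<Psi>: "(\<lambda>a b \<alpha> \<beta> x y. (\<beta>*a - \<alpha>*b)^(n div 2) * plus_quot n x y) = uv_comb (n div 2) \<Psi>"
    using uv_form_plus_quot unfolding uv_form_def by blast
  obtain \<Phi> where \<Phi>: "(\<lambda>a b \<alpha> \<beta> x y. (\<beta>*a - \<alpha>*b)^((n - 1) div 2) * minus_quot n x y) =
      uv_comb ((n - 1) div 2) \<Phi>"
    using uv_form_minus_quot[OF assms] unfolding uv_form_def by blast
  show ?thesis
    using \<Psi> \<Phi> unfolding fun_eq_iff uv_comb_def quad_form_def by blast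
qed

end
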